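(* Let $(S,\mathcal{S})$ be a measurable space with $\Delta\in\mathcal{S}\otimes\mathcal{S}$. Then every constructive map $\tau:\Omega\to C(S)$ is the union of countably many pairwise disjoint finite cr-sets (i.e. there are finite cr-sets $\rho_n$ with $\rho_n(\omega)\cap\rho_m(\omega)=\emptyset$ for $n\neq m$ and $\tau(\omega)=\bigcup_n\rho_n(\omega)$ for all $\omega$). In particular, $\tau$ is $\mathcal{F}$-$\mathcal{C}(\mathcal{S})$ measurable, i.e. a cr-set.
   Context: $\Delta=\{(x,x)\mid x\in S\}$. $(\Omega,\mathcal{F},P)$ is a probability space; $C(S)$ is the set of countable subsets of $S$; $N_A(M)=|A\cap M|$; $\mathcal{C}(\mathcal{S})=\sigma(N_A\mid A\in\mathcal{S})$; a cr-set is an $\mathcal{F}$-$\mathcal{C}(\mathcal{S})$ measurable map $\Omega\to C(S)$, finite if its values are finite sets. A map $\tau:\Omega\to C(S)$ is constructive if $\tau(\omega)=\bigcup_k\pi_k(\omega)$ for all $\omega$ for some finite cr-sets $\pi_k$, $k\in\mathbb{N}$. *)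

theory Defs
  imports "HOL-Probability.Probability"
begin

definition cset_space :: "'a measure \<Rightarrow> 'a set set" where
  "cset_space M = {X. X \<subseteq> space M \<and> countable X}"

definition cnt :: "'a set \<Rightarrow> 'a set \<Rightarrow> enat" where
  "cnt A X = (if finite (A \<inter> X) then enat (card (A \<inter> X)) else \<infinity>)"

text \<open>The measurable space (C(S), \<C>(\<S>)), where \<C>(\<S>) is the sigma-algebra generated by
  the maps N_A, A in \<S> (with the discrete sigma-algebra on the extended naturals).\<close>
definition cset_measure :: "'a measure \<Rightarrow> 'a set measure" where
  "cset_measure M = sigma (cset_space M)
     {cnt A -` B \<inter> cset_space M | A B. A \<in> sets M}"

definition crset :: "'w measure \<Rightarrow> 'a measure \<Rightarrow> ('w \<Rightarrow> 'a set) \<Rightarrow> bool" where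
  "crset F M \<xi> \<longleftrightarrow> \<xi> \<in> measurable F (cset_measure M)"

definition finite_crset :: "'w measure \<Rightarrow> 'a measure \<Rightarrow> ('w \<Rightarrow> 'a set) \<Rightarrow> bool" where
  "finite_crset F M \<xi> \<longleftrightarrow> crset F M \<xi> \<and> (\<forall>\<omega>\<in>space F. finite (\<xi> \<omega>))"

definition constructive :: "'w measure \<Rightarrow> 'a measure \<Rightarrow> ('w \<Rightarrow> 'a set) \<Rightarrow> bool" where
  "constructive F M \<tau> \<longleftrightarrow>
     (\<forall>\<omega>\<in>space F. \<tau> \<omega> \<in> cset_space M) \<and>
     (\<exists>\<pi> :: nat \<Rightarrow> 'w \<Rightarrow> 'a set. (\<forall>k. finite_crset F M (\<pi> k)) \<and>
        (\<forall>\<omega>\<in>space F. \<tau> \<omega> = (\<Union>k. \<pi> k \<omega>)))"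

end

theory Submission
  imports Defs
begin

(* A map into the countable subsets of S is a cr-set iff, for every A in the
   sigma-algebra of S and every m, the event "N_A(xi) \<ge> m" is measurable; for finite-valued
   maps this says that every count card (A \<inter> xi) is a measurable nat-valued map.

   The heart of the argument is that finite cr-sets are closed under union and difference.
   Given finite cr-sets pi and sigma, a Dynkin-system argument shows that the count
   card (C \<inter> (pi \<times> sigma)) is measurable for every C in the product sigma-algebra; taking
   C = diagonal \<inter> (A \<times> S), which is measurable because the diagonal is, yields measurability
   of card (A \<inter> pi \<inter> sigma), and inclusion-exclusion then handles pi \<union> sigma and pi - sigma.

   For the theorem write tau = \<Union>k pi_k.  The prefix unions U_n = \<Union>_{k<n} pi_k are finite
   cr-sets, hence so are the disjointed sets rho_n = pi_n - U_n, which partition tau.  Finally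
   tau is the increasing union of the U_n, and an increasing union of finite cr-sets is a
   cr-set because "N_A(\<Union>U_n) \<ge> m" is the union over n of the events "N_A(U_n) \<ge> m". *)


abbreviation nat_measurable :: "'w measure \<Rightarrow> ('w \<Rightarrow> nat) \<Rightarrow> bool" where
  "nat_measurable F f \<equiv> f \<in> measurable F (count_space UNIV)"

lemma nat_measurable_iff_levels:
  "nat_measurable F f \<longleftrightarrow> (\<forall>m. {\<omega>\<in>space F. f \<omega> = m} \<in> sets F)"
proof -
  have "\<And>m. f -` {m} \<inter> space F = {\<omega>\<in>space F. f \<omega> = m}" by auto
  then show ?thesis by (simp add: measurable_count_space_eq2_countable)
qed

lemma nat_measurable_upper_levelsI:
  assumes "\<And>m. {\<omega>\<in>space F. m \<le> f \<omega>} \<in> sets F"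
  shows "nat_measurable F f"
proof -
  have "\<And>m. {\<omega>\<in>space F. f \<omega> = m} = {\<omega>\<in>space F. m \<le> f \<omega>} - {\<omega>\<in>space F. Suc m \<le> f \<omega>}"
    by auto
  then show ?thesis unfolding nat_measurable_iff_levels using assms by auto
qed

lemma nat_measurable_upper_levels:
  assumes "nat_measurable F f"
  shows "{\<omega>\<in>space F. m \<le> f \<omega>} \<in> sets F"
proof -
  have "f -` {m..} \<inter> space F \<in> sets F" using measurable_sets[OF assms] by auto
  moreover have "f -` {m..} \<inter> space F = {\<omega>\<in>space F. m \<le> f \<omega>}" by auto
  ultimately show ?thesis by simp
qed

lemma nat_measurable_combine:
  assumes f: "nat_measurable F f" and g: "nat_measurable F g"
  shows "nat_measurable F (\<lambda>\<omega>. h (f \<omega>) (g \<omega>))"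
  unfolding nat_measurable_iff_levels
proof
  fix m
  have "{\<omega>\<in>space F. h (f \<omega>) (g \<omega>) = m} =
      (\<Union>a. \<Union>b. if h a b = m then {\<omega>\<in>space F. f \<omega> = a} \<inter> {\<omega>\<in>space F. g \<omega> = b} else {})"
    by auto
  also have "\<dots> \<in> sets F"
    using f g unfolding nat_measurable_iff_levels by (auto intro!: sets.countable_UN)
  finally show "{\<omega>\<in>space F. h (f \<omega>) (g \<omega>) = m} \<in> sets F" .
qed


lemma enat_le_cnt_iff:
  "enat m \<le> cnt A X \<longleftrightarrow> (\<exists>D. D \<subseteq> A \<inter> X \<and> finite D \<and> card D = m)"
proof
  assume le: "enat m \<le> cnt A X"
  show "\<exists>D. D \<subseteq> A \<inter> X \<and> finite D \<and> card D = m"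
  proof (cases "finite (A \<inter> X)")
    case True
    then have "m \<le> card (A \<inter> X)" using le by (simp add: cnt_def)
    then show ?thesis using True by (meson obtain_subset_with_card_n rev_finite_subset)
  next
    case False
    then show ?thesis by (meson infinite_arbitrarily_large)
  qed
next
  assume "\<exists>D. D \<subseteq> A \<inter> X \<and> finite D \<and> card D = m"
  then obtain D where D: "D \<subseteq> A \<inter> X" "finite D" "card D = m" by blast
  show "enat m \<le> cnt A X"
  proof (cases "finite (A \<inter> X)")
    case True
    then have "m \<le> card (A \<inter> X)" using D card_mono by blast
    then show ?thesis using True by (simp add: cnt_def)
  qed (simp add: cnt_def)
qed

lemma cnt_finite: "finite (A \<inter> X) \<Longrightarrow> cnt A X = enat (card (A \<inter> X))"
  by (simp add: cnt_def)

lemma cnt_commute: "cnt A X = cnt X A"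
  by (simp add: cnt_def Int_commute)

lemma enat_eq_enat_iff: "(x::enat) = enat k \<longleftrightarrow> enat k \<le> x \<and> \<not> enat (Suc k) \<le> x"
  by (cases x) auto

lemma enat_eq_infinity_iff: "(x::enat) = \<infinity> \<longleftrightarrow> (\<forall>m. enat m \<le> x)"
  by (metis Suc_n_not_le_n enat.exhaust enat_ord_simps(1) enat_ord_simps(3))

lemma finite_subset_incseq_Union:
  fixes U :: "nat \<Rightarrow> 'a set"
  assumes "incseq U" "finite X" "X \<subseteq> (\<Union>n. U n)"
  shows "\<exists>n. X \<subseteq> U n"
  using assms(2,3)
proof (induction X rule: finite_induct)
  case empty then show ?case by auto
next
  case (insert x X)
  then obtain n i where "X \<subseteq> U n" "x \<in> U i" by auto
  then have "insert x X \<subseteq> U (max n i)"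
    using monoD[OF assms(1), of n "max n i"] monoD[OF assms(1), of i "max n i"] by auto
  then show ?case by blast
qed

lemma incseq_prefix_Union: "incseq (\<lambda>n. \<Union>k<n. A k)"
  by (intro monoI UN_mono) auto

lemma le_cnt_incseq_Union:
  fixes U :: "nat \<Rightarrow> 'a set"
  assumes "incseq U"
  shows "enat m \<le> cnt A (\<Union>n. U n) \<longleftrightarrow> (\<exists>n. enat m \<le> cnt A (U n))"
proof
  assume "enat m \<le> cnt A (\<Union>n. U n)"
  then obtain D where D: "D \<subseteq> A \<inter> (\<Union>n. U n)" "finite D" "card D = m"
    by (auto simp: enat_le_cnt_iff)
  then obtain n where "D \<subseteq> U n" using finite_subset_incseq_Union[OF assms] by blast
  then show "\<exists>n. enat m \<le> cnt A (U n)" using D by (auto simp: enat_le_cnt_iff)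
next
  assume "\<exists>n. enat m \<le> cnt A (U n)"
  then show "enat m \<le> cnt A (\<Union>n. U n)" by (auto simp: enat_le_cnt_iff)
qed


lemma space_cset_measure: "space (cset_measure M) = cset_space M"
  unfolding cset_measure_def by (rule space_measure_of) auto

lemma crset_count_events:
  assumes "crset F M \<xi>" "A \<in> sets M"
  shows "{\<omega>\<in>space F. cnt A (\<xi> \<omega>) \<in> B} \<in> sets F"
proof -
  let ?G = "cnt A -` B \<inter> cset_space M"
  have "?G \<in> sets (cset_measure M)" unfolding cset_measure_def
    by (subst sets_measure_of) (auto intro!: sigma_sets.Basic assms(2))
  then have "\<xi> -` ?G \<inter> space F \<in> sets F"
    using assms(1) unfolding crset_def by (rule measurable_sets[rotated])
  moreover have "\<xi> -` ?G \<inter> space F = {\<omega>\<in>space F. cnt A (\<xi> \<omega>) \<in> B}"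
    using measurable_space[OF assms(1)[unfolded crset_def]] by (auto simp: space_cset_measure)
  ultimately show ?thesis by simp
qed

(* Conversely, measurability of the events N_A(xi) \<ge> m characterises cr-sets: every level
   set of N_A(xi), finite or infinite, is built from these by countable operations. *)
lemma crsetI:
  assumes vals: "\<And>\<omega>. \<omega> \<in> space F \<Longrightarrow> \<xi> \<omega> \<in> cset_space M"
    and upper: "\<And>A m. A \<in> sets M \<Longrightarrow> {\<omega>\<in>space F. enat m \<le> cnt A (\<xi> \<omega>)} \<in> sets F"
  shows "crset F M \<xi>"
  unfolding crset_def cset_measure_def
proof (rule measurable_measure_of)
  show "{cnt A -` B \<inter> cset_space M |A B. A \<in> sets M} \<subseteq> Pow (cset_space M)" by auto
  show "\<xi> \<in> space F \<rightarrow> cset_space M" using vals by auto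
  fix G assume "G \<in> {cnt A -` B \<inter> cset_space M |A B. A \<in> sets M}"
  then obtain A B where G: "G = cnt A -` B \<inter> cset_space M" and A: "A \<in> sets M" by auto
  define L where "L m = {\<omega>\<in>space F. enat m \<le> cnt A (\<xi> \<omega>)}" for m
  have level: "{\<omega>\<in>space F. cnt A (\<xi> \<omega>) = b} \<in> sets F" for b
  proof (cases b)
    case (enat k)
    have "{\<omega>\<in>space F. cnt A (\<xi> \<omega>) = enat k} = L k - L (Suc k)"
      by (auto simp: L_def enat_eq_enat_iff)
    then show ?thesis using upper[OF A] enat by (auto simp: L_def)
  next
    case infinity
    have "{\<omega>\<in>space F. cnt A (\<xi> \<omega>) = \<infinity>} = space F \<inter> (\<Inter>m. L m)"
      by (auto simp: L_def enat_eq_infinity_iff)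
    then show ?thesis using upper[OF A] infinity by (auto simp: L_def)
  qed
  have "\<xi> -` G \<inter> space F = (\<Union>b\<in>B. {\<omega>\<in>space F. cnt A (\<xi> \<omega>) = b})"
    using G vals by auto
  also have "\<dots> \<in> sets F" using level by (auto intro: sets.countable_UN')
  finally show "\<xi> -` G \<inter> space F \<in> sets F" .
qed

lemma finite_crset_values:
  assumes "finite_crset F M \<xi>" "\<omega> \<in> space F"
  shows "\<xi> \<omega> \<subseteq> space M" "finite (\<xi> \<omega>)"
  using assms measurable_space[of \<xi> F "cset_measure M" \<omega>]
  by (auto simp: finite_crset_def crset_def space_cset_measure cset_space_def)

lemma finite_crset_card:
  assumes "finite_crset F M \<xi>" "A \<in> sets M"
  shows "nat_measurable F (\<lambda>\<omega>. card (A \<inter> \<xi> \<omega>))"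
  unfolding nat_measurable_iff_levels
proof
  fix m
  have "{\<omega>\<in>space F. cnt A (\<xi> \<omega>) \<in> {enat m}} \<in> sets F"
    using assms by (intro crset_count_events) (auto simp: finite_crset_def)
  moreover have "{\<omega>\<in>space F. cnt A (\<xi> \<omega>) \<in> {enat m}} = {\<omega>\<in>space F. card (A \<inter> \<xi> \<omega>) = m}"
    using finite_crset_values(2)[OF assms(1)] by (auto simp: cnt_def)
  ultimately show "{\<omega>\<in>space F. card (A \<inter> \<xi> \<omega>) = m} \<in> sets F" by simp
qed

lemma finite_crsetI:
  assumes vals: "\<And>\<omega>. \<omega> \<in> space F \<Longrightarrow> \<xi> \<omega> \<subseteq> space M \<and> finite (\<xi> \<omega>)"
    and counts: "\<And>A. A \<in> sets M \<Longrightarrow> nat_measurable F (\<lambda>\<omega>. card (A \<inter> \<xi> \<omega>))"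
  shows "finite_crset F M \<xi>"
  unfolding finite_crset_def
proof
  show "crset F M \<xi>"
  proof (rule crsetI)
    fix \<omega> assume "\<omega> \<in> space F"
    then show "\<xi> \<omega> \<in> cset_space M"
      using vals by (auto simp: cset_space_def intro: countable_finite)
  next
    fix A m assume "A \<in> sets M"
    moreover have "{\<omega>\<in>space F. enat m \<le> cnt A (\<xi> \<omega>)} = {\<omega>\<in>space F. m \<le> card (A \<inter> \<xi> \<omega>)}"
      using vals by (auto simp: cnt_def)
    ultimately show "{\<omega>\<in>space F. enat m \<le> cnt A (\<xi> \<omega>)} \<in> sets F"
      using nat_measurable_upper_levels[OF counts] by simp
  qed
qed (use vals in auto)

lemma finite_crset_empty: "finite_crset F M (\<lambda>_. {})"
  by (rule finite_crsetI) auto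

lemma crset_incseq_Union:
  assumes fin: "\<And>n. finite_crset F M (U n)"
    and inc: "\<And>\<omega>. \<omega> \<in> space F \<Longrightarrow> incseq (\<lambda>n. U n \<omega>)"
  shows "crset F M (\<lambda>\<omega>. \<Union>n. U n \<omega>)"
proof (rule crsetI)
  fix \<omega> assume \<omega>: "\<omega> \<in> space F"
  have "countable (U n \<omega>)" for n
    using finite_crset_values(2)[OF fin \<omega>] by (rule countable_finite)
  then show "(\<Union>n. U n \<omega>) \<in> cset_space M"
    using finite_crset_values(1)[OF fin \<omega>] by (auto simp: cset_space_def)
next
  fix A m assume A: "A \<in> sets M"
  have "{\<omega>\<in>space F. enat m \<le> cnt A (\<Union>n. U n \<omega>)} =
      (\<Union>n. {\<omega>\<in>space F. enat m \<le> cnt A (U n \<omega>)})"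
    using le_cnt_incseq_Union[OF inc] by auto
  also have "\<dots> \<in> sets F"
    using crset_count_events[of F M "U _" A "{enat m..}"] fin A by (auto simp: finite_crset_def)
  finally show "{\<omega>\<in>space F. enat m \<le> cnt A (\<Union>n. U n \<omega>)} \<in> sets F" .
qed


(* Counts in a random finite set K are continuous along increasing unions B_n; this is
   used with K = pi \<times> sigma for the union step of the Dynkin argument below. *)
lemma nat_measurable_card_incseq_Union:
  assumes fin: "\<And>\<omega>. \<omega> \<in> space F \<Longrightarrow> finite (K \<omega>)" and inc: "incseq B"
    and counts: "\<And>n. nat_measurable F (\<lambda>\<omega>. card (B n \<inter> K \<omega>))"
  shows "nat_measurable F (\<lambda>\<omega>. card ((\<Union>n. B n) \<inter> K \<omega>))"
proof (rule nat_measurable_upper_levelsI)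
  fix m
  have "m \<le> card ((\<Union>n. B n) \<inter> K \<omega>) \<longleftrightarrow> (\<exists>n. m \<le> card (B n \<inter> K \<omega>))"
    if "\<omega> \<in> space F" for \<omega>
    using le_cnt_incseq_Union[OF inc, of m "K \<omega>"] fin[OF that]
    by (simp add: cnt_commute[of "K \<omega>"] cnt_finite)
  then have "{\<omega>\<in>space F. m \<le> card ((\<Union>n. B n) \<inter> K \<omega>)} =
      (\<Union>n. {\<omega>\<in>space F. m \<le> card (B n \<inter> K \<omega>)})"
    by auto
  also have "\<dots> \<in> sets F" using nat_measurable_upper_levels[OF counts] by auto
  finally show "{\<omega>\<in>space F. m \<le> card ((\<Union>n. B n) \<inter> K \<omega>)} \<in> sets F" .
qed

lemma nat_measurable_card_disjoint_prefix:
  fixes A :: "nat \<Rightarrow> 'b set" and n :: nat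
  assumes fin: "\<And>\<omega>. \<omega> \<in> space F \<Longrightarrow> finite (K \<omega>)" and disj: "disjoint_family A"
    and counts: "\<And>i. nat_measurable F (\<lambda>\<omega>. card (A i \<inter> K \<omega>))"
  shows "nat_measurable F (\<lambda>\<omega>. card ((\<Union>i<n. A i) \<inter> K \<omega>))"
proof (induction n)
  case 0 then show ?case by simp
next
  case (Suc n)
  have "card ((\<Union>i<Suc n. A i) \<inter> K \<omega>) = card (A n \<inter> K \<omega>) + card ((\<Union>i<n. A i) \<inter> K \<omega>)"
    if "\<omega> \<in> space F" for \<omega>
  proof -
    have "(\<Union>i<Suc n. A i) \<inter> K \<omega> = (A n \<inter> K \<omega>) \<union> ((\<Union>i<n. A i) \<inter> K \<omega>)"
      by (auto simp: lessThan_Suc)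
    moreover have "(A n \<inter> K \<omega>) \<inter> ((\<Union>i<n. A i) \<inter> K \<omega>) = {}"
      using disj by (auto simp: disjoint_family_on_def) (metis disjoint_iff less_irrefl)
    ultimately show ?thesis using fin[OF that] by (simp add: card_Un_disjoint)
  qed
  then show ?case
    using nat_measurable_combine[OF counts Suc.IH, of "(+)"] by (subst measurable_cong) auto
qed

(* For finite cr-sets pi, sigma and C in the product sigma-algebra, card (C \<inter> pi \<times> sigma)
   is measurable: the sets C with this property form a Dynkin system containing the
   measurable rectangles. *)
lemma pair_count_measurable:
  assumes p: "finite_crset F M \<pi>" and s: "finite_crset F M \<sigma>"
    and C: "C \<in> sets (M \<Otimes>\<^sub>M M)"
  shows "nat_measurable F (\<lambda>\<omega>. card (C \<inter> (\<pi> \<omega> \<times> \<sigma> \<omega>)))"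
  using Int_stable_pair_measure_generator[of M M] pair_measure_closed[of M M]
    C[unfolded sets_pair_measure]
proof (induction rule: sigma_sets_induct_disjoint)
  case (basic C)
  then obtain a b where C: "C = a \<times> b" "a \<in> sets M" "b \<in> sets M" by auto
  then have "\<And>\<omega>. card (C \<inter> (\<pi> \<omega> \<times> \<sigma> \<omega>)) = card (a \<inter> \<pi> \<omega>) * card (b \<inter> \<sigma> \<omega>)"
    by (simp add: Times_Int_Times card_cartesian_product)
  then show ?case
    using nat_measurable_combine[OF finite_crset_card[OF p C(2)] finite_crset_card[OF s C(3)],
        of "(*)"]
    by simp
next
  case empty then show ?case by simp
next
  case (compl C)
  have "card ((space M \<times> space M - C) \<inter> (\<pi> \<omega> \<times> \<sigma> \<omega>)) =
      card (space M \<inter> \<pi> \<omega>) * card (space M \<inter> \<sigma> \<omega>) - card (C \<inter> (\<pi> \<omega> \<times> \<sigma> \<omega>))"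
    if "\<omega> \<in> space F" for \<omega>
  proof -
    have "\<pi> \<omega> \<subseteq> space M" "\<sigma> \<omega> \<subseteq> space M" "finite (\<pi> \<omega>)" "finite (\<sigma> \<omega>)"
      using finite_crset_values[OF p that] finite_crset_values[OF s that] by auto
    moreover from this have
      "(space M \<times> space M - C) \<inter> (\<pi> \<omega> \<times> \<sigma> \<omega>) = (\<pi> \<omega> \<times> \<sigma> \<omega>) - C \<inter> (\<pi> \<omega> \<times> \<sigma> \<omega>)"
      by auto
    ultimately show ?thesis
      by (simp add: card_Diff_subset card_cartesian_product Int_absorb1)
  qed
  then show ?case
    using nat_measurable_combine[OF nat_measurable_combine[OF finite_crset_card[OF p sets.top]
          finite_crset_card[OF s sets.top], of "(*)"] compl.IH, of "(-)"]
    by (subst measurable_cong) auto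
next
  case (union A)
  let ?K = "\<lambda>\<omega>. \<pi> \<omega> \<times> \<sigma> \<omega>"
  have fin: "finite (?K \<omega>)" if "\<omega> \<in> space F" for \<omega>
    using finite_crset_values[OF p that] finite_crset_values[OF s that] by simp
  have "(\<Union>i. A i) = (\<Union>n. \<Union>i<n. A i)" by blast
  moreover note incseq_prefix_Union[of A]
  ultimately show ?case
    using nat_measurable_card_incseq_Union[OF fin _
        nat_measurable_card_disjoint_prefix[OF fin union.hyps(1) union.IH]]
    by simp
qed

(* Here the measurable diagonal enters: with C = diagonal \<inter> (A \<times> S) we count A \<inter> pi \<inter> sigma. *)
lemma intersection_count_measurable:
  assumes diag: "{(x, x) | x. x \<in> space M} \<in> sets (M \<Otimes>\<^sub>M M)"
    and p: "finite_crset F M \<pi>" and s: "finite_crset F M \<sigma>" and A: "A \<in> sets M"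
  shows "nat_measurable F (\<lambda>\<omega>. card (A \<inter> (\<pi> \<omega> \<inter> \<sigma> \<omega>)))"
proof -
  let ?C = "{(x, x) | x. x \<in> space M} \<inter> (A \<times> space M)"
  have C: "?C \<in> sets (M \<Otimes>\<^sub>M M)" using diag A by (intro sets.Int pair_measureI) auto
  have "card (?C \<inter> (\<pi> \<omega> \<times> \<sigma> \<omega>)) = card (A \<inter> (\<pi> \<omega> \<inter> \<sigma> \<omega>))" if "\<omega> \<in> space F" for \<omega>
  proof -
    have "?C \<inter> (\<pi> \<omega> \<times> \<sigma> \<omega>) = (\<lambda>x. (x, x)) ` (A \<inter> (\<pi> \<omega> \<inter> \<sigma> \<omega>))"
      using finite_crset_values[OF p that] by auto
    moreover have "inj_on (\<lambda>x. (x, x)) (A \<inter> (\<pi> \<omega> \<inter> \<sigma> \<omega>))" by (auto simp: inj_on_def)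
    ultimately show ?thesis by (simp add: card_image)
  qed
  then show ?thesis using pair_count_measurable[OF p s C] by (subst (asm) measurable_cong) auto
qed

lemma finite_crset_Diff:
  assumes diag: "{(x, x) | x. x \<in> space M} \<in> sets (M \<Otimes>\<^sub>M M)"
    and p: "finite_crset F M \<pi>" and s: "finite_crset F M \<sigma>"
  shows "finite_crset F M (\<lambda>\<omega>. \<pi> \<omega> - \<sigma> \<omega>)"
proof (rule finite_crsetI)
  fix \<omega> assume "\<omega> \<in> space F"
  then show "\<pi> \<omega> - \<sigma> \<omega> \<subseteq> space M \<and> finite (\<pi> \<omega> - \<sigma> \<omega>)"
    using finite_crset_values[OF p] by auto
next
  fix A assume A: "A \<in> sets M"
  have "card (A \<inter> (\<pi> \<omega> - \<sigma> \<omega>)) = card (A \<inter> \<pi> \<omega>) - card (A \<inter> (\<pi> \<omega> \<inter> \<sigma> \<omega>))"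
    if "\<omega> \<in> space F" for \<omega>
  proof -
    have "A \<inter> (\<pi> \<omega> - \<sigma> \<omega>) = (A \<inter> \<pi> \<omega>) - (A \<inter> (\<pi> \<omega> \<inter> \<sigma> \<omega>))" by auto
    also have "card \<dots> = card (A \<inter> \<pi> \<omega>) - card (A \<inter> (\<pi> \<omega> \<inter> \<sigma> \<omega>))"
      using finite_crset_values(2)[OF p that] by (intro card_Diff_subset) auto
    finally show ?thesis .
  qed
  then show "nat_measurable F (\<lambda>\<omega>. card (A \<inter> (\<pi> \<omega> - \<sigma> \<omega>)))"
    using nat_measurable_combine[OF finite_crset_card[OF p A]
        intersection_count_measurable[OF diag p s A], of "(-)"]
    by (subst measurable_cong) auto
qed

lemma finite_crset_Un:
  assumes diag: "{(x, x) | x. x \<in> space M} \<in> sets (M \<Otimes>\<^sub>M M)"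
    and p: "finite_crset F M \<pi>" and s: "finite_crset F M \<sigma>"
  shows "finite_crset F M (\<lambda>\<omega>. \<pi> \<omega> \<union> \<sigma> \<omega>)"
proof (rule finite_crsetI)
  fix \<omega> assume "\<omega> \<in> space F"
  then show "\<pi> \<omega> \<union> \<sigma> \<omega> \<subseteq> space M \<and> finite (\<pi> \<omega> \<union> \<sigma> \<omega>)"
    using finite_crset_values[OF p] finite_crset_values[OF s] by auto
next
  fix A assume A: "A \<in> sets M"
  have "card (A \<inter> (\<pi> \<omega> \<union> \<sigma> \<omega>)) =
      card (A \<inter> \<pi> \<omega>) + card (A \<inter> \<sigma> \<omega>) - card (A \<inter> (\<pi> \<omega> \<inter> \<sigma> \<omega>))"
    if "\<omega> \<in> space F" for \<omega>
  proof -
    have "A \<inter> (\<pi> \<omega> \<union> \<sigma> \<omega>) = (A \<inter> \<pi> \<omega>) \<union> (A \<inter> \<sigma> \<omega>)"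
      "A \<inter> (\<pi> \<omega> \<inter> \<sigma> \<omega>) = (A \<inter> \<pi> \<omega>) \<inter> (A \<inter> \<sigma> \<omega>)" by auto
    then show ?thesis using finite_crset_values[OF p that] finite_crset_values[OF s that]
      by (metis card_Un_Int diff_add_inverse2 finite_Int)
  qed
  then show "nat_measurable F (\<lambda>\<omega>. card (A \<inter> (\<pi> \<omega> \<union> \<sigma> \<omega>)))"
    using nat_measurable_combine[OF nat_measurable_combine[OF finite_crset_card[OF p A]
          finite_crset_card[OF s A], of "(+)"] intersection_count_measurable[OF diag p s A], of "(-)"]
    by (subst measurable_cong) auto
qed

lemma finite_crset_prefix_Union:
  fixes \<pi> :: "nat \<Rightarrow> 'w \<Rightarrow> 'a set" and n :: nat
  assumes diag: "{(x, x) | x. x \<in> space M} \<in> sets (M \<Otimes>\<^sub>M M)"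
    and p: "\<And>k. finite_crset F M (\<pi> k)"
  shows "finite_crset F M (\<lambda>\<omega>. \<Union>k<n. \<pi> k \<omega>)"
proof (induction n)
  case 0 then show ?case using finite_crset_empty by simp
next
  case (Suc n)
  then show ?case
    using finite_crset_Un[OF diag p Suc.IH] by (simp add: lessThan_Suc)
qed

lemma finite_crset_disjointed:
  assumes diag: "{(x, x) | x. x \<in> space M} \<in> sets (M \<Otimes>\<^sub>M M)"
    and p: "\<And>k. finite_crset F M (\<pi> k)"
  shows "finite_crset F M (\<lambda>\<omega>. disjointed (\<lambda>k. \<pi> k \<omega>) n)"
  using finite_crset_Diff[OF diag p finite_crset_prefix_Union[OF diag p, where n = n]]
  by (simp add: disjointed_def atLeast0LessThan)


theorem proposition6p2:
  fixes F :: "'w measure" and M :: "'a measure" and \<tau> :: "'w \<Rightarrow> 'a set"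
  assumes "prob_space F"
    and "{(x, x) | x. x \<in> space M} \<in> sets (M \<Otimes>\<^sub>M M)"
    and "constructive F M \<tau>"
  shows "(\<exists>\<rho> :: nat \<Rightarrow> 'w \<Rightarrow> 'a set. (\<forall>n. finite_crset F M (\<rho> n)) \<and>
            (\<forall>\<omega>\<in>space F. \<forall>n m. n \<noteq> m \<longrightarrow> \<rho> n \<omega> \<inter> \<rho> m \<omega> = {}) \<and>
            (\<forall>\<omega>\<in>space F. \<tau> \<omega> = (\<Union>n. \<rho> n \<omega>)))
         \<and> crset F M \<tau>"
proof -
  note diag = assms(2)
  obtain \<pi> :: "nat \<Rightarrow> 'w \<Rightarrow> 'a set" where p: "\<And>k. finite_crset F M (\<pi> k)"
    and tau: "\<And>\<omega>. \<omega> \<in> space F \<Longrightarrow> \<tau> \<omega> = (\<Union>k. \<pi> k \<omega>)"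
    using assms(3) unfolding constructive_def by (elim conjE exE) auto
  define \<rho> where "\<rho> n \<omega> = disjointed (\<lambda>k. \<pi> k \<omega>) n" for n \<omega>
  have rho: "finite_crset F M (\<rho> n)" for n
    using finite_crset_disjointed[OF diag p] by (simp add: \<rho>_def[abs_def])
  have disj: "\<rho> n \<omega> \<inter> \<rho> m \<omega> = {}" if "n \<noteq> m" for n m \<omega>
    using disjoint_family_disjointed[of "\<lambda>k. \<pi> k \<omega>"] that
    unfolding disjoint_family_on_def \<rho>_def by blast
  have union: "\<tau> \<omega> = (\<Union>n. \<rho> n \<omega>)" if "\<omega> \<in> space F" for \<omega>
    using tau[OF that] by (simp add: \<rho>_def UN_disjointed_eq)
  have "crset F M (\<lambda>\<omega>. \<Union>n. \<Union>k<n. \<pi> k \<omega>)"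
    using finite_crset_prefix_Union[OF diag p] by (intro crset_incseq_Union incseq_prefix_Union)
  moreover have "(\<Union>n. \<Union>k<n. \<pi> k \<omega>) = \<tau> \<omega>" if "\<omega> \<in> space F" for \<omega>
    using tau[OF that] by blast
  ultimately have "crset F M \<tau>"
    unfolding crset_def by (simp cong: measurable_cong)
  then show ?thesis
    using rho disj union by (intro conjI exI[of _ \<rho>]) auto
qed

end
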